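(* Let $S=S'aS''$ where $S',S''$ are words and the letter $a$ occurs in $S$ exactly once. Then a word $C$ is an s-cover of $S$ if and only if $C=C'aC''$ where $C'$ is an s-cover of $S'$ and $C''$ is an s-cover of $S''$.
   Context: For words $C,S$, $C$ is an \emph{s-cover} of $S$ if for every position $i$ of $S$ there exist indices $j_0<\dots<j_{|C|-1}$ with $S[j_t]=C[t]$ for all $t$ and $i\in\{j_0,\dots,j_{|C|-1}\}$; by this definition the empty word is an s-cover of the empty word, and the empty word is not an s-cover of any nonempty word unless... (only words whose positions all lie in occurrences count; a nonempty word's s-covers are nonempty). *)

theory Defs
  imports Main
begin

definition occurrence :: "'a list \<Rightarrow> 'a list \<Rightarrow> (nat \<Rightarrow> nat) \<Rightarrow> bool" where
  "occurrence C S j \<longleftrightarrow>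
     (\<forall>t<length C. j t < length S \<and> S ! (j t) = C ! t) \<and>
     (\<forall>t. Suc t < length C \<longrightarrow> j t < j (Suc t))"

text \<open>C is an s-cover of S: C occurs in S, and every position of S lies in some occurrence of C.
  (So the empty word is the only s-cover of the empty word, and a nonempty word's s-covers are nonempty.)\<close>
definition scover :: "'a list \<Rightarrow> 'a list \<Rightarrow> bool" where
  "scover C S \<longleftrightarrow>
     (\<exists>j. occurrence C S j) \<and>
     (\<forall>i<length S. \<exists>j. occurrence C S j \<and> (\<exists>t<length C. j t = i))"

end

theory Submission
  imports Defs
begin

text \<open>The letter \<open>a\<close> occurs in \<open>S' a S''\<close> only at position \<open>|S'|\<close>, so an occurrence of
  \<open>C\<close> covering that position exhibits \<open>C = C' a C''\<close>, and then every occurrence of \<open>C\<close> sends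
  this \<open>a\<close> to \<open>|S'|\<close>; by monotonicity it maps \<open>C'\<close> into \<open>S'\<close> and \<open>C''\<close> into \<open>S''\<close>.
  Conversely, occurrences of \<open>C'\<close> in \<open>S'\<close>, of \<open>a\<close> in \<open>a\<close> and of \<open>C''\<close> in \<open>S''\<close>
  concatenate, so s-covers are compatible with concatenation.\<close>

lemma occurrence_strict_mono:
  assumes occ: "occurrence C S j" and "t < u" and "u < length C"
  shows "j t < j u"
  using assms(2,3)
proof (induction u)
  case 0
  then show ?case by simp
next
  case (Suc u)
  have "j u < j (Suc u)" using occ Suc.prems unfolding occurrence_def by blast
  with Suc show ?case by (cases "t = u") auto
qed

lemma occurrence_append:
  assumes "occurrence C' S' j'" and "occurrence C'' S'' j''"
  shows "occurrence (C' @ C'') (S' @ S'')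
           (\<lambda>t. if t < length C' then j' t else length S' + j'' (t - length C'))"
  using assms unfolding occurrence_def
  by (auto simp: nth_append Suc_diff_le not_less less_Suc_eq)

lemma occurrence_prefix:
  assumes "occurrence (C' @ C'') (S' @ S'') j" and "\<forall>t<length C'. j t < length S'"
  shows "occurrence C' S' j"
  using assms unfolding occurrence_def
  by (metis (no_types, lifting) length_append nth_append trans_less_add1)

lemma occurrence_suffix:
  assumes occ: "occurrence (C' @ C'') (S' @ S'') j"
    and right: "\<forall>t<length C''. length S' \<le> j (length C' + t)"
  shows "occurrence C'' S'' (\<lambda>t. j (length C' + t) - length S')"
  unfolding occurrence_def
proof (intro conjI allI impI)
  fix t assume t: "t < length C''"
  then have "j (length C' + t) < length (S' @ S'')"
    and "(S' @ S'') ! j (length C' + t) = (C' @ C'') ! (length C' + t)"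
    using occ unfolding occurrence_def by auto
  with right t show "j (length C' + t) - length S' < length S''"
    and "S'' ! (j (length C' + t) - length S') = C'' ! t"
    by (auto simp: nth_append)
next
  fix t assume "Suc t < length C''"
  with occ right show "j (length C' + t) - length S' < j (length C' + Suc t) - length S'"
    unfolding occurrence_def by (auto simp: diff_less_mono)
qed

definition covered :: "'a list \<Rightarrow> 'a list \<Rightarrow> nat \<Rightarrow> bool" where
  "covered C S i \<longleftrightarrow> (\<exists>j. occurrence C S j \<and> (\<exists>t<length C. j t = i))"

lemma scover_iff_covered:
  "scover C S \<longleftrightarrow> (\<exists>j. occurrence C S j) \<and> (\<forall>i<length S. covered C S i)"
  unfolding scover_def covered_def ..

lemma covered_append_left:
  assumes "covered C' S' i" and "occurrence C'' S'' j''"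
  shows "covered (C' @ C'') (S' @ S'') i"
proof -
  obtain j' u where occ: "occurrence C' S' j'" and u: "u < length C'" "j' u = i"
    using assms(1) unfolding covered_def by blast
  let ?j = "\<lambda>t. if t < length C' then j' t else length S' + j'' (t - length C')"
  have "occurrence (C' @ C'') (S' @ S'') ?j" using occurrence_append[OF occ assms(2)] .
  moreover have "?j u = i" using u by simp
  ultimately show ?thesis using u unfolding covered_def by fastforce
qed

lemma covered_append_right:
  assumes "occurrence C' S' j'" and "covered C'' S'' i"
  shows "covered (C' @ C'') (S' @ S'') (length S' + i)"
proof -
  obtain j'' u where occ: "occurrence C'' S'' j''" and u: "u < length C''" "j'' u = i"
    using assms(2) unfolding covered_def by blast
  let ?j = "\<lambda>t. if t < length C' then j' t else length S' + j'' (t - length C')"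
  have "occurrence (C' @ C'') (S' @ S'') ?j" using occurrence_append[OF assms(1) occ] .
  moreover have "?j (length C' + u) = length S' + i" using u by simp
  ultimately show ?thesis using u unfolding covered_def by fastforce
qed

lemma scover_append:
  assumes "scover C' S'" and "scover C'' S''"
  shows "scover (C' @ C'') (S' @ S'')"
proof -
  obtain j' j'' where j': "occurrence C' S' j'" and j'': "occurrence C'' S'' j''"
    using assms unfolding scover_def by blast
  have "covered (C' @ C'') (S' @ S'') i" if "i < length (S' @ S'')" for i
  proof (cases "i < length S'")
    case True
    with assms(1) j'' show ?thesis
      by (simp add: scover_iff_covered covered_append_left)
  next
    case False
    then have "i = length S' + (i - length S')" "i - length S' < length S''"
      using that by auto
    with assms(2) j' show ?thesis
      by (metis scover_iff_covered covered_append_right)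
  qed
  then show ?thesis
    using occurrence_append[OF j' j''] unfolding scover_iff_covered by blast
qed

lemma scover_singleton: "scover [a] [a]"
  unfolding scover_def occurrence_def by auto

lemma nth_eq_unique_letter:
  assumes "a \<notin> set S'" "a \<notin> set S''"
    and "k < length (S' @ a # S'')" "(S' @ a # S'') ! k = a"
  shows "k = length S'"
  using assms
  by (cases k "length S'" rule: linorder_cases)
    (auto simp: nth_append nth_Cons' split: if_splits dest: nth_mem)

lemma occurrence_through_unique_letter:
  assumes occ: "occurrence (C' @ a # C'') (S' @ a # S'') j"
    and "a \<notin> set S'" "a \<notin> set S''"
  shows "j (length C') = length S'"
    and "occurrence C' S' j"
    and "occurrence C'' S'' (\<lambda>t. j (Suc (length C' + t)) - Suc (length S'))"
proof -
  have "j (length C') < length (S' @ a # S'')" "(S' @ a # S'') ! j (length C') = a"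
    using occ unfolding occurrence_def by (auto simp: nth_append)
  with assms(2,3) show at_a: "j (length C') = length S'"
    by (rule nth_eq_unique_letter)
  have "\<forall>t<length C'. j t < length S'"
    using occurrence_strict_mono[OF occ] at_a by fastforce
  with occ show "occurrence C' S' j" by (rule occurrence_prefix)
  have occ': "occurrence ((C' @ [a]) @ C'') ((S' @ [a]) @ S'') j" using occ by simp
  have "\<forall>t<length C''. length (S' @ [a]) \<le> j (length (C' @ [a]) + t)"
    using occurrence_strict_mono[OF occ, of "length C'"] at_a
    by (simp add: Suc_le_eq)
  from occurrence_suffix[OF occ' this]
  show "occurrence C'' S'' (\<lambda>t. j (Suc (length C' + t)) - Suc (length S'))" by simp
qed

lemma covered_prefix_through_unique_letter:
  assumes cov: "covered (C' @ a # C'') (S' @ a # S'') i" and "i < length S'"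
    and "a \<notin> set S'" "a \<notin> set S''"
  shows "covered C' S' i"
proof -
  obtain j t where occ: "occurrence (C' @ a # C'') (S' @ a # S'') j"
    and t: "t < length (C' @ a # C'')" "j t = i"
    using cov unfolding covered_def by blast
  note through = occurrence_through_unique_letter[OF occ assms(3,4)]
  have "t < length C'"
  proof (rule ccontr)
    assume "\<not> t < length C'"
    then have "j (length C') \<le> j t"
      using occurrence_strict_mono[OF occ, of "length C'" t] t(1)
      by (cases "t = length C'") auto
    with through(1) t(2) assms(2) show False by simp
  qed
  with through(2) t(2) show ?thesis unfolding covered_def by blast
qed

lemma covered_suffix_through_unique_letter:
  assumes cov: "covered (C' @ a # C'') (S' @ a # S'') (Suc (length S' + i))"
    and "a \<notin> set S'" "a \<notin> set S''"
  shows "covered C'' S'' i"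
proof -
  obtain j t where occ: "occurrence (C' @ a # C'') (S' @ a # S'') j"
    and t: "t < length (C' @ a # C'')" "j t = Suc (length S' + i)"
    using cov unfolding covered_def by blast
  note through = occurrence_through_unique_letter[OF occ assms(2,3)]
  have "length C' < t"
  proof (rule ccontr)
    assume "\<not> length C' < t"
    then have "j t \<le> j (length C')"
      using occurrence_strict_mono[OF occ, of t "length C'"]
      by (cases "t = length C'") auto
    with through(1) t(2) show False by simp
  qed
  then obtain v where "t = Suc (length C' + v)"
    using less_imp_Suc_add by blast
  with t have "v < length C''" "j (Suc (length C' + v)) - Suc (length S') = i" by auto
  with through(3) show ?thesis unfolding covered_def by blast
qed

lemma scover_split_at_unique_letter:
  assumes sc: "scover C (S' @ a # S'')" and "a \<notin> set S'" "a \<notin> set S''"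
  shows "\<exists>C' C''. C = C' @ a # C'' \<and> scover C' S' \<and> scover C'' S''"
proof -
  have cov: "covered C (S' @ a # S'') i" if "i < length (S' @ a # S'')" for i
    using sc that unfolding scover_iff_covered by blast
  obtain j0 u where occ0: "occurrence C (S' @ a # S'') j0" and u: "u < length C" "j0 u = length S'"
    using cov[of "length S'"] unfolding covered_def by auto
  have "C ! u = (S' @ a # S'') ! j0 u"
    using occ0 u(1) unfolding occurrence_def by simp
  with u have "C ! u = a" by simp
  then obtain C' C'' where C: "C = C' @ a # C''"
    using id_take_nth_drop[OF u(1)] by metis
  note through = occurrence_through_unique_letter[OF _ assms(2,3), of C' C'', folded C]
  have "scover C' S'"
    unfolding scover_iff_covered
  proof (intro conjI allI impI)
    show "\<exists>j. occurrence C' S' j" using through(2)[OF occ0] by blast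
    fix i assume "i < length S'"
    with cov[of i] show "covered C' S' i"
      unfolding C by (auto intro: covered_prefix_through_unique_letter[OF _ _ assms(2,3)])
  qed
  moreover have "scover C'' S''"
    unfolding scover_iff_covered
  proof (intro conjI allI impI)
    show "\<exists>j. occurrence C'' S'' j" using through(3)[OF occ0] by blast
    fix i assume "i < length S''"
    with cov[of "Suc (length S' + i)"] show "covered C'' S'' i"
      unfolding C by (auto intro: covered_suffix_through_unique_letter[OF _ assms(2,3)])
  qed
  ultimately show ?thesis using C by blast
qed

theorem mainTheorem18:
  fixes S' S'' C :: "'a list" and a :: 'a
  assumes "a \<notin> set S'" and "a \<notin> set S''"
  shows "scover C (S' @ [a] @ S'') \<longleftrightarrow>
         (\<exists>C' C''. C = C' @ [a] @ C'' \<and> scover C' S' \<and> scover C'' S'')"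
proof
  assume "scover C (S' @ [a] @ S'')"
  then show "\<exists>C' C''. C = C' @ [a] @ C'' \<and> scover C' S' \<and> scover C'' S''"
    using scover_split_at_unique_letter[OF _ assms] by simp
next
  assume "\<exists>C' C''. C = C' @ [a] @ C'' \<and> scover C' S' \<and> scover C'' S''"
  then obtain C' C'' where "C = C' @ [a] @ C''" "scover C' S'" "scover C'' S''"
    by blast
  then show "scover C (S' @ [a] @ S'')"
    using scover_append[OF _ scover_append[OF scover_singleton]] by simp
qed

end
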